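(* For all graphs $G$ and $H$: if $G$ and $H$ are distinguishable by NC-1WL, then they are distinguishable by EB-1WL.
   Context: All graphs are finite, simple and undirected, without isolated vertices; $N(v)$ denotes the neighborhood of $v$. An ordered edge of $G=(V,E)$ is a pair $(u,v)$ with $\{u,v\}\in E$. EB-1WL coloring: $\mathrm{eb}^{(0)}(G,(u,v))=1$ for every ordered edge, and $\mathrm{eb}^{(\ell+1)}(G,(u,v)) = \big(\mathrm{eb}^{(\ell)}(G,(u,v)),\ \{\!\{\mathrm{eb}^{(\ell)}(G,(u,x)) : x\in N(u)\}\!\},\ \{\!\{(\mathrm{eb}^{(\ell)}(G,(u,y)),\mathrm{eb}^{(\ell)}(G,(v,y))) : y\in N(u)\cap N(v)\}\!\},\ \{\!\{\mathrm{eb}^{(\ell)}(G,(v,z)) : z\in N(v)\}\!\}\big)$. $\mathrm{eb}^{(\ell)}(G)$ is the multiset of $\mathrm{eb}^{(\ell)}(G,(u,v))$ over all ordered edges. $G$ and $H$ are distinguishable by EB-1WL if $|V(G)|\neq|V(H)|$ or there is $\ell$ with $\mathrm{eb}^{(\ell)}(G)\neq\mathrm{eb}^{(\ell)}(H)$. NC-1WL coloring of vertices: $\mathrm{nc}^{(0)}(G,v)=1$ and $\mathrm{nc}^{(\ell+1)}(G,v)=\big(\mathrm{nc}^{(\ell)}(G,v),\ \{\!\{\mathrm{nc}^{(\ell)}(G,u): u\in N(v)\}\!\},\ \{\!\{(\mathrm{nc}^{(\ell)}(G,u),\mathrm{nc}^{(\ell)}(G,w)) : u,w\in N(v),\ \{u,w\}\in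 E\}\!\}\big)$. $\mathrm{nc}^{(\ell)}(G)=\{\!\{\mathrm{nc}^{(\ell)}(G,v): v\in V\}\!\}$. $G$ and $H$ are distinguishable by NC-1WL if there is $\ell$ with $\mathrm{nc}^{(\ell)}(G)\neq\mathrm{nc}^{(\ell)}(H)$. Colors are nested tuples/multisets, comparable across graphs. *)

theory Defs
  imports Main "HOL-Library.Multiset"
begin

definition simple_graph :: "'a set \<Rightarrow> ('a \<times> 'a) set \<Rightarrow> bool" where
  "simple_graph V E \<longleftrightarrow> finite V \<and> E \<subseteq> V \<times> V \<and> sym E \<and> irrefl E
     \<and> (\<forall>v\<in>V. \<exists>u. (v, u) \<in> E)"

definition nbr :: "('a \<times> 'a) set \<Rightarrow> 'a \<Rightarrow> 'a set" where
  "nbr E v = {u. (v, u) \<in> E}"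

text \<open>Colours: nested tuples / multisets, shared across all graphs.\<close>
datatype ebcolor = EB0
  | EBS ebcolor "ebcolor multiset" "(ebcolor \<times> ebcolor) multiset" "ebcolor multiset"

datatype nccolor = NC0
  | NCS nccolor "nccolor multiset" "(nccolor \<times> nccolor) multiset"

fun eb :: "('a \<times> 'a) set \<Rightarrow> nat \<Rightarrow> 'a \<Rightarrow> 'a \<Rightarrow> ebcolor" where
  "eb E 0 u v = EB0"
| "eb E (Suc l) u v = EBS (eb E l u v)
      (image_mset (\<lambda>x. eb E l u x) (mset_set (nbr E u)))
      (image_mset (\<lambda>y. (eb E l u y, eb E l v y)) (mset_set (nbr E u \<inter> nbr E v)))
      (image_mset (\<lambda>z. eb E l v z) (mset_set (nbr E v)))"

definition eb_colors :: "('a \<times> 'a) set \<Rightarrow> nat \<Rightarrow> ebcolor multiset" where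
  "eb_colors E l = image_mset (\<lambda>(u, v). eb E l u v) (mset_set E)"

fun nc :: "('a \<times> 'a) set \<Rightarrow> nat \<Rightarrow> 'a \<Rightarrow> nccolor" where
  "nc E 0 v = NC0"
| "nc E (Suc l) v = NCS (nc E l v)
      (image_mset (\<lambda>u. nc E l u) (mset_set (nbr E v)))
      (image_mset (\<lambda>(u, w). (nc E l u, nc E l w))
         (mset_set {(u, w). u \<in> nbr E v \<and> w \<in> nbr E v \<and> (u, w) \<in> E}))"

definition nc_colors :: "'a set \<Rightarrow> ('a \<times> 'a) set \<Rightarrow> nat \<Rightarrow> nccolor multiset" where
  "nc_colors V E l = image_mset (nc E l) (mset_set V)"

definition eb_distinguishable ::
  "'a set \<Rightarrow> ('a \<times> 'a) set \<Rightarrow> 'b set \<Rightarrow> ('b \<times> 'b) set \<Rightarrow> bool" where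
  "eb_distinguishable VG EG VH EH \<longleftrightarrow>
     card VG \<noteq> card VH \<or> (\<exists>l. eb_colors EG l \<noteq> eb_colors EH l)"

definition nc_distinguishable ::
  "'a set \<Rightarrow> ('a \<times> 'a) set \<Rightarrow> 'b set \<Rightarrow> ('b \<times> 'b) set \<Rightarrow> bool" where
  "nc_distinguishable VG EG VH EH \<longleftrightarrow> (\<exists>l. nc_colors VG EG l \<noteq> nc_colors VH EH l)"

end

theory Submission
  imports Defs
begin

text \<open>After \<open>2 l\<close> rounds the EB colour of an ordered edge \<open>(v, u)\<close> determines the NC colour
of \<open>v\<close> after \<open>l\<close> rounds, through a decoding function that does not depend on the graph: the
neighbours \<open>x\<close> of \<open>v\<close> are read off from the colours of the edges \<open>(v, x)\<close>, and the edges
\<open>(x, y)\<close> inside \<open>N(v)\<close> from the common-neighbour component of the colour of \<open>(v, x)\<close>.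
The colour of a reversed edge is a syntactic function of the colour of the edge itself, which
lets the decoder pass from \<open>(v, x)\<close> to \<open>(x, v)\<close>. One further round also reveals the degree
of \<open>v\<close>. Since every vertex \<open>v\<close> is the tail of exactly \<open>deg v > 0\<close> ordered edges, the
multiset of pairs (NC colour, degree) over the vertices is obtained from the one over the
ordered edges by dividing each multiplicity by the degree.\<close>

primrec eb_reverse :: "nat \<Rightarrow> ebcolor \<Rightarrow> ebcolor" where
  "eb_reverse 0 c = c"
| "eb_reverse (Suc n) c = (case c of EB0 \<Rightarrow> EB0
     | EBS c' A T B \<Rightarrow> EBS (eb_reverse n c') B (image_mset prod.swap T) A)"

primrec eb_prev :: "ebcolor \<Rightarrow> ebcolor" where
  "eb_prev EB0 = EB0"
| "eb_prev (EBS c A T B) = c"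

primrec eb_tail_nbrs :: "ebcolor \<Rightarrow> ebcolor multiset" where
  "eb_tail_nbrs EB0 = {#}"
| "eb_tail_nbrs (EBS c A T B) = A"

primrec eb_common_nbrs :: "ebcolor \<Rightarrow> (ebcolor \<times> ebcolor) multiset" where
  "eb_common_nbrs EB0 = {#}"
| "eb_common_nbrs (EBS c A T B) = T"

lemma eb_swap: "eb E l u v = eb_reverse l (eb E l v u)"
proof (induction l arbitrary: u v)
  case 0
  then show ?case by simp
next
  case (Suc l)
  have "nbr E u \<inter> nbr E v = nbr E v \<inter> nbr E u" by blast
  then show ?case using Suc[symmetric] by (simp add: multiset.map_comp o_def)
qed

lemma eb_prev_eb [simp]: "eb_prev (eb E (Suc l) u v) = eb E l u v"
  by simp

lemma eb_tail_nbrs_eb [simp]: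
  "eb_tail_nbrs (eb E (Suc l) u v) = image_mset (eb E l u) (mset_set (nbr E u))"
  by simp

lemma finite_nbr: "finite E \<Longrightarrow> finite (nbr E v)"
  unfolding nbr_def by (rule finite_subset[of _ "snd ` E"]) force+

lemma image_mset_mset_set_eq_sum:
  "finite A \<Longrightarrow> image_mset f (mset_set A) = (\<Sum>a\<in>A. {#f a#})"
  by (induction A rule: finite_induct) auto

lemma image_mset_mset_set_Sigma:
  assumes "finite A" "\<And>a. a \<in> A \<Longrightarrow> finite (B a)"
  shows "image_mset f (mset_set (Sigma A B)) = (\<Sum>a\<in>A. image_mset (\<lambda>b. f (a, b)) (mset_set (B a)))"
proof -
  have "(\<Sum>a\<in>A. \<Sum>b\<in>B a. {#f (a, b)#}) = (\<Sum>p\<in>Sigma A B. {#f p#})"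
    using sum.Sigma[of A B "\<lambda>a b. {#f (a, b)#}"] assms by (simp add: case_prod_beta')
  moreover have "finite (Sigma A B)" using assms by blast
  ultimately show ?thesis
    using assms by (simp add: image_mset_mset_set_eq_sum)
qed

text \<open>A pair \<open>(p, q)\<close> in the common-neighbour
component of the colour of \<open>(v, x)\<close> is the pair of colours of \<open>(v, y)\<close> and \<open>(x, y)\<close>, so
\<open>q\<close> encodes \<open>x\<close> and the reversal of \<open>p\<close> encodes \<open>y\<close>.\<close>
primrec nc_of_eb :: "nat \<Rightarrow> ebcolor \<Rightarrow> nccolor" where
  "nc_of_eb 0 c = NC0"
| "nc_of_eb (Suc l) c = NCS (nc_of_eb l (eb_prev (eb_prev c)))
     (image_mset (\<lambda>d. nc_of_eb l (eb_reverse (2 * l) (eb_prev d))) (eb_tail_nbrs c))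
     (\<Sum>\<^sub># (image_mset (\<lambda>d. image_mset (\<lambda>(p, q). (nc_of_eb l q, nc_of_eb l (eb_reverse (2 * l) p)))
        (eb_common_nbrs d)) (eb_tail_nbrs c)))"

lemma nc_eq_nc_of_eb:
  assumes "finite E" "sym E" "(v, u) \<in> E"
  shows "nc E l v = nc_of_eb l (eb E (2 * l) v u)"
  using assms(3)
proof (induction l arbitrary: v u)
  case 0
  then show ?case by simp
next
  case (Suc l)
  have nbr_sym: "x \<in> nbr E y \<longleftrightarrow> (x, y) \<in> E" for x y
    using \<open>sym E\<close> unfolding nbr_def sym_def by blast
  let ?c = "eb E (Suc (2 * l)) v"
  have nbr_colours: "image_mset (\<lambda>x. nc_of_eb l (eb_reverse (2 * l) (eb E (2 * l) v x))) (mset_set (nbr E v))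
      = image_mset (nc E l) (mset_set (nbr E v))"
    using Suc.IH finite_nbr[OF \<open>finite E\<close>]
    by (intro image_mset_cong) (simp add: nbr_sym flip: eb_swap)
  have common_colours:
    "image_mset (\<lambda>(p, q). (nc_of_eb l q, nc_of_eb l (eb_reverse (2 * l) p))) (eb_common_nbrs (?c x))
       = image_mset (\<lambda>y. (nc E l x, nc E l y)) (mset_set (nbr E v \<inter> nbr E x))"
    if "x \<in> nbr E v" for x
  proof -
    have "nc_of_eb l (eb E (2 * l) x y) = nc E l x" "nc_of_eb l (eb E (2 * l) y v) = nc E l y"
      if "y \<in> nbr E v \<inter> nbr E x" for y
      using that Suc.IH[of x y] Suc.IH[of y v] \<open>sym E\<close> by (auto simp: nbr_def dest: symD)
    then show ?thesis
      using finite_nbr[OF \<open>finite E\<close>]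
      by (auto simp: multiset.map_comp o_def simp flip: eb_swap intro!: image_mset_cong)
  qed
  let ?decode = "\<lambda>x. image_mset (\<lambda>(p, q). (nc_of_eb l q, nc_of_eb l (eb_reverse (2 * l) p)))
    (eb_common_nbrs (?c x))"
  have "{(x, y). x \<in> nbr E v \<and> y \<in> nbr E v \<and> (x, y) \<in> E} = Sigma (nbr E v) (\<lambda>x. nbr E v \<inter> nbr E x)"
    by (auto simp: nbr_def)
  then have "image_mset (\<lambda>(x, y). (nc E l x, nc E l y))
      (mset_set {(x, y). x \<in> nbr E v \<and> y \<in> nbr E v \<and> (x, y) \<in> E})
    = (\<Sum>x\<in>nbr E v. image_mset (\<lambda>y. (nc E l x, nc E l y)) (mset_set (nbr E v \<inter> nbr E x)))"
    using finite_nbr[OF \<open>finite E\<close>] by (simp add: image_mset_mset_set_Sigma)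
  also have "\<dots> = (\<Sum>x\<in>nbr E v. ?decode x)"
    using common_colours by simp
  also have "\<dots> = \<Sum>\<^sub># (image_mset ?decode (mset_set (nbr E v)))"
    by (rule sum_unfold_sum_mset)
  finally have triangles: "image_mset (\<lambda>(x, y). (nc E l x, nc E l y))
      (mset_set {(x, y). x \<in> nbr E v \<and> y \<in> nbr E v \<and> (x, y) \<in> E})
    = \<Sum>\<^sub># (image_mset ?decode (mset_set (nbr E v)))" .
  show ?case
    using Suc.IH[OF Suc.prems] nbr_colours triangles
    by (simp add: multiset.map_comp o_def del: eb.simps)
qed

definition nc_degree_of_eb :: "nat \<Rightarrow> ebcolor \<Rightarrow> nccolor \<times> nat" where
  "nc_degree_of_eb l c = (nc_of_eb l (eb_prev c), size (eb_tail_nbrs c))"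

lemma nc_degree_of_eb_eb:
  assumes "finite E" "sym E" "(v, u) \<in> E"
  shows "nc_degree_of_eb l (eb E (Suc (2 * l)) v u) = (nc E l v, card (nbr E v))"
  using nc_eq_nc_of_eb[OF assms] finite_nbr[OF \<open>finite E\<close>]
  by (simp add: nc_degree_of_eb_def del: eb.simps)

lemma count_image_mset_Sigma_degree:
  assumes "finite V" "\<And>v. v \<in> V \<Longrightarrow> finite (N v)"
  shows "count (image_mset (\<lambda>(v, u). (f v, card (N v))) (mset_set (Sigma V N))) (c, d)
    = d * count (image_mset (\<lambda>v. (f v, card (N v))) (mset_set V)) (c, d)"
proof -
  have "image_mset (\<lambda>(v, u). (f v, card (N v))) (mset_set (Sigma V N))
      = (\<Sum>v\<in>V. replicate_mset (card (N v)) (f v, card (N v)))"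
    using assms by (simp add: image_mset_mset_set_Sigma image_mset_const_eq)
  then show ?thesis
    using assms(1)
    by (auto simp: image_mset_mset_set_eq_sum count_sum sum_distrib_left intro!: sum.cong)
qed

lemma image_mset_eq_if_degree_weighted_eq:
  fixes f :: "'a \<Rightarrow> 'c" and g :: "'b \<Rightarrow> 'c"
  assumes "finite V" "\<And>v. v \<in> V \<Longrightarrow> finite (N v) \<and> N v \<noteq> {}"
    and "finite W" "\<And>w. w \<in> W \<Longrightarrow> finite (M w) \<and> M w \<noteq> {}"
    and "image_mset (\<lambda>(v, u). (f v, card (N v))) (mset_set (Sigma V N))
      = image_mset (\<lambda>(w, x). (g w, card (M w))) (mset_set (Sigma W M))"
  shows "image_mset f (mset_set V) = image_mset g (mset_set W)"
proof -
  let ?FV = "image_mset (\<lambda>v. (f v, card (N v))) (mset_set V)"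
  let ?GW = "image_mset (\<lambda>w. (g w, card (M w))) (mset_set W)"
  have "count ?FV (c, d) = count ?GW (c, d)" for c d
  proof (cases "d = 0")
    case True
    then have "(c, d) \<notin># ?FV" "(c, d) \<notin># ?GW"
      using assms(1-4) by auto
    then show ?thesis by (simp only: not_in_iff)
  next
    case False
    then show ?thesis
      using assms count_image_mset_Sigma_degree[of V N f c d] count_image_mset_Sigma_degree[of W M g c d]
      by auto
  qed
  then have "?FV = ?GW" by (intro multiset_eqI) auto
  then have "image_mset fst ?FV = image_mset fst ?GW" by simp
  then show ?thesis by (simp add: multiset.map_comp o_def)
qed

lemma simple_graph_finite_edges: "simple_graph V E \<Longrightarrow> finite E"
  unfolding simple_graph_def by (meson finite_SigmaI finite_subset)

lemma simple_graph_edges_eq_Sigma: "simple_graph V E \<Longrightarrow> E = Sigma V (nbr E)"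
  unfolding simple_graph_def nbr_def by auto

lemma simple_graph_nbr:
  assumes "simple_graph V E" "v \<in> V"
  shows "finite (nbr E v) \<and> nbr E v \<noteq> {}"
proof
  show "finite (nbr E v)" by (rule finite_nbr[OF simple_graph_finite_edges[OF assms(1)]])
  show "nbr E v \<noteq> {}" using assms unfolding simple_graph_def nbr_def by blast
qed

lemma nc_degree_of_eb_colors:
  assumes "simple_graph V E"
  shows "image_mset (nc_degree_of_eb l) (eb_colors E (Suc (2 * l)))
    = image_mset (\<lambda>(v, u). (nc E l v, card (nbr E v))) (mset_set (Sigma V (nbr E)))"
proof -
  have "finite E" "sym E"
    using assms simple_graph_finite_edges unfolding simple_graph_def by blast+
  then show ?thesis
    unfolding eb_colors_def multiset.map_comp simple_graph_edges_eq_Sigma[OF assms, symmetric]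
    by (intro image_mset_cong) (auto simp: nc_degree_of_eb_eb simp del: eb.simps)
qed

theorem mainTheorem3:
  fixes VG :: "'a set" and EG :: "('a \<times> 'a) set"
    and VH :: "'b set" and EH :: "('b \<times> 'b) set"
  assumes "simple_graph VG EG" and "simple_graph VH EH"
    and "nc_distinguishable VG EG VH EH"
  shows "eb_distinguishable VG EG VH EH"
proof (rule ccontr)
  assume "\<not> eb_distinguishable VG EG VH EH"
  then have "eb_colors EG (Suc (2 * l)) = eb_colors EH (Suc (2 * l))" for l
    unfolding eb_distinguishable_def by blast
  then have degree_weighted_eq: "image_mset (\<lambda>(v, u). (nc EG l v, card (nbr EG v))) (mset_set (Sigma VG (nbr EG)))
      = image_mset (\<lambda>(w, x). (nc EH l w, card (nbr EH w))) (mset_set (Sigma VH (nbr EH)))" for l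
    by (simp only: nc_degree_of_eb_colors[OF assms(1), symmetric] nc_degree_of_eb_colors[OF assms(2), symmetric])
  have "nc_colors VG EG l = nc_colors VH EH l" for l
    unfolding nc_colors_def
    by (rule image_mset_eq_if_degree_weighted_eq[OF _ _ _ _ degree_weighted_eq])
      (use assms(1,2) simple_graph_nbr in \<open>simp_all add: simple_graph_def\<close>)
  then show False
    using assms(3) unfolding nc_distinguishable_def by blast
qed

end
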